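(* Let $\alpha\in(0,1]$, $0<\delta<\alpha$, and let $\mathcal{L}$ be the jump uncertainty set defined in the context. For each $\varphi\in C_b^3(\mathbb{R}^d)$ and all $x,x'\in\mathbb{R}^d$, $$\sup_{F_\mu\in\mathcal{L}}\int_{\mathbb{R}^d}\big|\delta^\alpha_\lambda\varphi(x')-\delta^\alpha_\lambda\varphi(x)\big|F_\mu(d\lambda)\le C_\alpha|x'-x|^\delta,$$ where $C_\alpha=\mathcal{K}_\alpha\big(4\|D\varphi\|_\infty^\delta\|\varphi\|_\infty^{1-\delta}+2\|D^3\varphi\|_\infty^\delta\|D^2\varphi\|_\infty^{1-\delta}\big)$ if $\alpha=1$ and $C_\alpha=\mathcal{K}_\alpha\big(4\|D\varphi\|_\infty^\delta\|\varphi\|_\infty^{1-\delta}+2\|D^2\varphi\|_\infty^\delta\|D\varphi\|_\infty^{1-\delta}\big)$ if $\alpha\in(0,1)$.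
   Context: For a symmetric finite measure $\mu$ on the unit sphere $S\subset\mathbb{R}^d$, $F_\mu(B)=\int_S\mu(dz)\int_0^\infty\mathbb{1}_B(rz)r^{-1-\alpha}dr$; given $\underline{\Lambda},\overline{\Lambda}>0$, $\mathcal{L}=\{F_\mu:\mu(S)\in(\underline{\Lambda},\overline{\Lambda})\}$. $\delta^\alpha_\lambda\varphi(x)=\varphi(x+\lambda)-\varphi(x)-\langle D\varphi(x),\lambda\mathbb{1}_{\{|\lambda|\le1\}}\rangle$ for $\alpha=1$ and $\varphi(x+\lambda)-\varphi(x)$ for $\alpha\in(0,1)$. $\mathcal{K}_1=\sup_{F_\mu\in\mathcal{L}}\int(|\lambda|^2\wedge1)F_\mu(d\lambda)$, and $\mathcal{K}_\alpha=\sup_{F_\mu\in\mathcal{L}}\int(|\lambda|\wedge1)F_\mu(d\lambda)$ for $\alpha\in(0,1)$ (these are finite). $C_b^3(\mathbb{R}^d)$: functions with uniformly bounded derivatives up to order 3; $\|\cdot\|_\infty$ is the sup norm. *)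

theory Defs
  imports "HOL-Analysis.Analysis"
begin

definition d1 :: "('a::euclidean_space \<Rightarrow> real) \<Rightarrow> 'a \<Rightarrow> 'a \<Rightarrow> real" where
  "d1 \<phi> x h = frechet_derivative \<phi> (at x) h"

definition d2 :: "('a::euclidean_space \<Rightarrow> real) \<Rightarrow> 'a \<Rightarrow> 'a \<Rightarrow> 'a \<Rightarrow> real" where
  "d2 \<phi> x h k = frechet_derivative (\<lambda>y. d1 \<phi> y h) (at x) k"

definition d3 :: "('a::euclidean_space \<Rightarrow> real) \<Rightarrow> 'a \<Rightarrow> 'a \<Rightarrow> 'a \<Rightarrow> 'a \<Rightarrow> real" where
  "d3 \<phi> x h k l = frechet_derivative (\<lambda>y. d2 \<phi> y h k) (at x) l"

definition Cb3 :: "('a::euclidean_space \<Rightarrow> real) \<Rightarrow> bool" where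
  "Cb3 \<phi> \<longleftrightarrow>
     (\<forall>x. \<phi> differentiable (at x)) \<and>
     (\<forall>h x. (\<lambda>y. d1 \<phi> y h) differentiable (at x)) \<and>
     (\<forall>h k x. (\<lambda>y. d2 \<phi> y h k) differentiable (at x)) \<and>
     (\<forall>h k l. continuous_on UNIV (\<lambda>y. d3 \<phi> y h k l)) \<and>
     bdd_above (range (\<lambda>x. \<bar>\<phi> x\<bar>)) \<and>
     bdd_above {\<bar>d1 \<phi> x h\<bar> | x h. norm h \<le> 1} \<and>
     bdd_above {\<bar>d2 \<phi> x h k\<bar> | x h k. norm h \<le> 1 \<and> norm k \<le> 1} \<and>
     bdd_above {\<bar>d3 \<phi> x h k l\<bar> | x h k l. norm h \<le> 1 \<and> norm k \<le> 1 \<and> norm l \<le> 1}"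

definition sup0 :: "('a::euclidean_space \<Rightarrow> real) \<Rightarrow> real" where
  "sup0 \<phi> = (SUP x. \<bar>\<phi> x\<bar>)"

definition sup1 :: "('a::euclidean_space \<Rightarrow> real) \<Rightarrow> real" where
  "sup1 \<phi> = Sup {\<bar>d1 \<phi> x h\<bar> | x h. norm h \<le> 1}"

definition sup2 :: "('a::euclidean_space \<Rightarrow> real) \<Rightarrow> real" where
  "sup2 \<phi> = Sup {\<bar>d2 \<phi> x h k\<bar> | x h k. norm h \<le> 1 \<and> norm k \<le> 1}"

definition sup3 :: "('a::euclidean_space \<Rightarrow> real) \<Rightarrow> real" where
  "sup3 \<phi> = Sup {\<bar>d3 \<phi> x h k l\<bar> | x h k l. norm h \<le> 1 \<and> norm k \<le> 1 \<and> norm l \<le> 1}"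

definition sym_sphere_measure :: "'a::euclidean_space measure \<Rightarrow> bool" where
  "sym_sphere_measure \<mu> \<longleftrightarrow>
     space \<mu> = sphere 0 1 \<and>
     sets \<mu> = sets (restrict_space borel (sphere 0 1)) \<and>
     emeasure \<mu> (space \<mu>) < \<infinity> \<and>
     (\<forall>B\<in>sets \<mu>. emeasure \<mu> (uminus ` B) = emeasure \<mu> B)"

text \<open>\<open>F_\<mu>(B) = \<integral>\<^sub>S \<mu>(dz) \<integral>\<^sub>0\<^sup>\<infinity> 1_B(r z) r^(-1-\<alpha>) dr\<close>, as the image of
  \<open>\<mu> \<otimes> r^(-1-\<alpha>) 1_(0,\<infinity>) dr\<close> under \<open>(z,r) \<mapsto> r z\<close>.\<close>
definition Fmu :: "real \<Rightarrow> 'a::euclidean_space measure \<Rightarrow> 'a measure" where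
  "Fmu \<alpha> \<mu> = distr (\<mu> \<Otimes>\<^sub>M density lborel (\<lambda>r. ennreal (indicator {0<..} r * r powr (-1-\<alpha>))))
                 borel (\<lambda>p. snd p *\<^sub>R fst p)"

definition Lset :: "real \<Rightarrow> real \<Rightarrow> real \<Rightarrow> 'a::euclidean_space measure set" where
  "Lset \<alpha> \<Lambda>l \<Lambda>u = {Fmu \<alpha> \<mu> | \<mu>. sym_sphere_measure \<mu> \<and>
        ennreal \<Lambda>l < emeasure \<mu> (space \<mu>) \<and> emeasure \<mu> (space \<mu>) < ennreal \<Lambda>u}"

definition Kconst :: "real \<Rightarrow> real \<Rightarrow> real \<Rightarrow> 'a::euclidean_space itself \<Rightarrow> ennreal" where
  "Kconst \<alpha> \<Lambda>l \<Lambda>u _ =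
     (if \<alpha> = 1 then (SUP F\<in>(Lset \<alpha> \<Lambda>l \<Lambda>u :: 'a measure set). \<integral>\<^sup>+ lam. ennreal (min ((norm lam)\<^sup>2) 1) \<partial>F)
      else (SUP F\<in>(Lset \<alpha> \<Lambda>l \<Lambda>u :: 'a measure set). \<integral>\<^sup>+ lam. ennreal (min (norm lam) 1) \<partial>F))"

definition delta_op :: "real \<Rightarrow> ('a::euclidean_space \<Rightarrow> real) \<Rightarrow> 'a \<Rightarrow> 'a \<Rightarrow> real" where
  "delta_op \<alpha> \<phi> lam x =
     (if \<alpha> = 1 then \<phi> (x + lam) - \<phi> x - (if norm lam \<le> 1 then d1 \<phi> x lam else 0)
      else \<phi> (x + lam) - \<phi> x)"

definition Calpha :: "real \<Rightarrow> real \<Rightarrow> ('a::euclidean_space \<Rightarrow> real) \<Rightarrow> real" where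
  "Calpha \<alpha> \<delta> \<phi> =
     (if \<alpha> = 1
      then 4 * sup1 \<phi> powr \<delta> * sup0 \<phi> powr (1 - \<delta>) + 2 * sup3 \<phi> powr \<delta> * sup2 \<phi> powr (1 - \<delta>)
      else 4 * sup1 \<phi> powr \<delta> * sup0 \<phi> powr (1 - \<delta>) + 2 * sup2 \<phi> powr \<delta> * sup1 \<phi> powr (1 - \<delta>))"

end

(* The increment phi(. + lambda) - phi (for alpha = 1 and |lambda| <= 1, its first-order Taylor
   remainder) is compared at x' and x in two ways: through sup norms alone, and by the mean value
   theorem, through one more derivative times |x' - x|.  Since min a b <= b^delta a^(1 - delta),
   the two bounds interpolate to a delta-Hoelder bound.  Both carry the factor |lambda| (|lambda|^2
   for the Taylor remainder) when |lambda| <= 1 and the factor 1 otherwise, which is the integrand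
   defining K_alpha; integrating against F_mu and taking the supremum gives the claim. *)

theory Submission
  imports Defs
begin

lemma min_le_powr_interpolation:
  fixes a b \<delta> :: real
  assumes "0 \<le> a" "0 \<le> b" "0 < \<delta>" "\<delta> < 1"
  shows "min a b \<le> b powr \<delta> * a powr (1 - \<delta>)"
proof (cases "a \<le> b")
  case True
  have "min a b = a powr \<delta> * a powr (1 - \<delta>)"
    using True \<open>0 \<le> a\<close> by (cases "a = 0") (simp_all add: powr_add[symmetric])
  also have "\<dots> \<le> b powr \<delta> * a powr (1 - \<delta>)"
    using True assms by (intro mult_right_mono powr_mono2) auto
  finally show ?thesis .
next
  case False
  have "min a b = b powr \<delta> * b powr (1 - \<delta>)"
    using False \<open>0 \<le> b\<close> by (cases "b = 0") (simp_all add: powr_add[symmetric])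
  also have "\<dots> \<le> b powr \<delta> * a powr (1 - \<delta>)"
    using False assms by (intro mult_left_mono powr_mono2) auto
  finally show ?thesis .
qed

lemma abs_le_powr_interpolation:
  fixes D A B c \<delta> :: real
  assumes "\<bar>D\<bar> \<le> c * A" "\<bar>D\<bar> \<le> c * B"
    and "0 \<le> A" "0 \<le> B" "0 \<le> c" "0 < \<delta>" "\<delta> < 1"
  shows "\<bar>D\<bar> \<le> c * (B powr \<delta> * A powr (1 - \<delta>))"
proof -
  have "\<bar>D\<bar> \<le> c * min A B"
    using assms(1,2) by (simp add: min_def)
  also have "\<dots> \<le> c * (B powr \<delta> * A powr (1 - \<delta>))"
    using min_le_powr_interpolation[of A B \<delta>] assms(3-) by (intro mult_left_mono) auto
  finally show ?thesis .
qed

lemma abs_diff_le_of_derivative_bound: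
  fixes f :: "'a::{real_normed_vector, perfect_space} \<Rightarrow> real"
  assumes "convex S" "\<And>y. y \<in> S \<Longrightarrow> (f has_derivative f' y) (at y)"
    and "\<And>y v. y \<in> S \<Longrightarrow> \<bar>f' y v\<bar> \<le> B * norm v" "a \<in> S" "b \<in> S"
  shows "\<bar>f a - f b\<bar> \<le> B * norm (a - b)"
proof -
  have "norm (f a - f b) \<le> B * norm (a - b)"
    by (rule differentiable_bound[where f' = f' and S = S])
      (use assms in \<open>auto intro: has_derivative_at_withinI onorm_le\<close>)
  then show ?thesis by simp
qed

lemma has_derivative_translate:
  assumes "\<And>z. (g has_derivative g' z) (at z)"
  shows "((\<lambda>y. g (y + c)) has_derivative g' (y + c)) (at y)"
proof -
  have "((\<lambda>y. y + c) has_derivative (\<lambda>v. v)) (at y)"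
    by (intro has_derivative_add_const has_derivative_ident)
  from has_derivative_compose[OF this assms] show ?thesis by simp
qed

lemma abs_second_difference_le:
  fixes g :: "'a::{real_normed_vector, perfect_space} \<Rightarrow> real"
  assumes g': "\<And>y. (g has_derivative g' y) (at y)"
    and g'_lipschitz: "\<And>a b v. \<bar>g' a v - g' b v\<bar> \<le> K * norm v * norm (a - b)"
  shows "\<bar>(g (x' + lam) - g x') - (g (x + lam) - g x)\<bar> \<le> K * norm lam * norm (x' - x)"
proof (rule abs_diff_le_of_derivative_bound[where S = UNIV])
  show "((\<lambda>y. g (y + lam) - g y) has_derivative (\<lambda>v. g' (y + lam) v - g' y v)) (at y)" for y
    by (intro has_derivative_diff has_derivative_translate g')
  show "\<bar>g' (y + lam) v - g' y v\<bar> \<le> K * norm lam * norm v" for y v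
    using g'_lipschitz[where a = "y + lam" and b = y and v = v] by (simp add: mult_ac)
qed auto

lemma frechet_derivative_cmult:
  fixes f :: "'a::real_normed_vector \<Rightarrow> real"
  assumes "f differentiable (at x)"
  shows "frechet_derivative (\<lambda>y. c * f y) (at x) h = c * frechet_derivative f (at x) h"
proof -
  have "((\<lambda>y. c * f y) has_derivative (\<lambda>h. c * frechet_derivative f (at x) h)) (at x)"
    using assms by (intro has_derivative_mult_right) (simp add: frechet_derivative_works)
  from fun_cong[OF frechet_derivative_at[OF this]] show ?thesis ..
qed

lemma abs_le_norm_if_homogeneous:
  fixes f :: "'a::real_normed_vector \<Rightarrow> real"
  assumes homogeneous: "\<And>c v. f (c *\<^sub>R v) = c * f v"
    and bounded: "\<And>u. norm u \<le> 1 \<Longrightarrow> \<bar>f u\<bar> \<le> M"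
  shows "\<bar>f v\<bar> \<le> M * norm v"
proof (cases "v = 0")
  case True
  then show ?thesis using homogeneous[of 0 0] by simp
next
  case False
  have "\<bar>f v\<bar> = norm v * \<bar>f (v /\<^sub>R norm v)\<bar>"
    using homogeneous[of "norm v" "v /\<^sub>R norm v"] False by (simp add: abs_mult)
  also have "\<dots> \<le> norm v * M"
    using False by (intro mult_left_mono bounded) auto
  finally show ?thesis by (simp add: mult.commute)
qed

lemma SUP_nn_integral_le_cmult:
  fixes f w :: "'a::topological_space \<Rightarrow> ennreal"
  assumes "\<And>F. F \<in> L \<Longrightarrow> sets F = sets borel" "w \<in> borel_measurable borel"
    and "\<And>x. f x \<le> c * w x"
  shows "(SUP F\<in>L. \<integral>\<^sup>+ x. f x \<partial>F) \<le> c * (SUP F\<in>L. \<integral>\<^sup>+ x. w x \<partial>F)"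
proof (rule SUP_least)
  fix F assume F: "F \<in> L"
  have "(\<integral>\<^sup>+ x. f x \<partial>F) \<le> (\<integral>\<^sup>+ x. c * w x \<partial>F)"
    by (intro nn_integral_mono assms(3))
  also have "\<dots> = c * (\<integral>\<^sup>+ x. w x \<partial>F)"
    using measurable_cong_sets[OF assms(1)[OF F] refl] assms(2) by (intro nn_integral_cmult) blast
  also have "\<dots> \<le> c * (SUP F\<in>L. \<integral>\<^sup>+ x. w x \<partial>F)"
    by (rule mult_left_mono[OF SUP_upper[OF F]]) simp
  finally show "(\<integral>\<^sup>+ x. f x \<partial>F) \<le> c * (SUP F\<in>L. \<integral>\<^sup>+ x. w x \<partial>F)" .
qed

definition jump_weight :: "real \<Rightarrow> 'a::real_normed_vector \<Rightarrow> real" where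
  "jump_weight \<alpha> lam = (if \<alpha> = 1 then min ((norm lam)\<^sup>2) 1 else min (norm lam) 1)"

lemma Kconst_eq_SUP_jump_weight:
  "Kconst \<alpha> \<Lambda>l \<Lambda>u TYPE('a::euclidean_space)
     = (SUP F\<in>(Lset \<alpha> \<Lambda>l \<Lambda>u :: 'a measure set). \<integral>\<^sup>+ lam. ennreal (jump_weight \<alpha> lam) \<partial>F)"
  by (simp add: Kconst_def jump_weight_def)

lemma sets_Lset: "F \<in> Lset \<alpha> \<Lambda>l \<Lambda>u \<Longrightarrow> sets F = sets borel"
  by (auto simp: Lset_def Fmu_def)

context
  fixes \<phi> :: "'a::euclidean_space \<Rightarrow> real"
  assumes Cb3: "Cb3 \<phi>"
begin

lemma has_derivative_d1: "(\<phi> has_derivative d1 \<phi> y) (at y)"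
proof -
  have "d1 \<phi> y = frechet_derivative \<phi> (at y)"
    by (simp add: fun_eq_iff d1_def)
  with Cb3 show ?thesis
    unfolding Cb3_def by (simp add: frechet_derivative_works)
qed

lemma has_derivative_d2: "((\<lambda>z. d1 \<phi> z v) has_derivative d2 \<phi> y v) (at y)"
proof -
  have "d2 \<phi> y v = frechet_derivative (\<lambda>z. d1 \<phi> z v) (at y)"
    by (simp add: fun_eq_iff d2_def)
  with Cb3 show ?thesis
    unfolding Cb3_def by (simp add: frechet_derivative_works)
qed

lemma has_derivative_d3: "((\<lambda>z. d2 \<phi> z v w) has_derivative d3 \<phi> y v w) (at y)"
proof -
  have "d3 \<phi> y v w = frechet_derivative (\<lambda>z. d2 \<phi> z v w) (at y)"
    by (simp add: fun_eq_iff d3_def)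
  with Cb3 show ?thesis
    unfolding Cb3_def by (simp add: frechet_derivative_works)
qed

lemma d1_scaleR: "d1 \<phi> y (c *\<^sub>R v) = c * d1 \<phi> y v"
  using linear_cmul[OF has_derivative_linear[OF has_derivative_d1]] by simp

lemma d2_scaleR_right: "d2 \<phi> y v (c *\<^sub>R w) = c * d2 \<phi> y v w"
  using linear_cmul[OF has_derivative_linear[OF has_derivative_d2]] by simp

lemma d3_scaleR_3: "d3 \<phi> y v w (c *\<^sub>R l) = c * d3 \<phi> y v w l"
  using linear_cmul[OF has_derivative_linear[OF has_derivative_d3]] by simp

lemma d2_scaleR_left: "d2 \<phi> y (c *\<^sub>R v) w = c * d2 \<phi> y v w"
  using Cb3 unfolding d2_def Cb3_def by (simp add: d1_scaleR frechet_derivative_cmult)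

lemma d3_scaleR_1: "d3 \<phi> y (c *\<^sub>R v) w l = c * d3 \<phi> y v w l"
  using Cb3 unfolding d3_def Cb3_def by (simp add: d2_scaleR_left frechet_derivative_cmult)

lemma d3_scaleR_2: "d3 \<phi> y v (c *\<^sub>R w) l = c * d3 \<phi> y v w l"
  using Cb3 unfolding d3_def Cb3_def by (simp add: d2_scaleR_right frechet_derivative_cmult)

lemma abs_le_sup0: "\<bar>\<phi> y\<bar> \<le> sup0 \<phi>"
  using Cb3 unfolding sup0_def Cb3_def by (intro cSup_upper) auto

lemma abs_d1_le: "\<bar>d1 \<phi> y v\<bar> \<le> sup1 \<phi> * norm v"
proof (rule abs_le_norm_if_homogeneous[OF d1_scaleR])
  show "\<bar>d1 \<phi> y u\<bar> \<le> sup1 \<phi>" if "norm u \<le> 1" for u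
    using Cb3 that unfolding sup1_def Cb3_def by (intro cSup_upper) auto
qed

lemma abs_d2_le: "\<bar>d2 \<phi> y v w\<bar> \<le> sup2 \<phi> * norm v * norm w"
proof -
  have "\<bar>d2 \<phi> y v w\<bar> \<le> (sup2 \<phi> * norm w) * norm v"
  proof (rule abs_le_norm_if_homogeneous[where f = "\<lambda>v. d2 \<phi> y v w", OF d2_scaleR_left])
    fix u :: 'a assume "norm u \<le> 1"
    show "\<bar>d2 \<phi> y u w\<bar> \<le> sup2 \<phi> * norm w"
    proof (rule abs_le_norm_if_homogeneous[OF d2_scaleR_right])
      show "\<bar>d2 \<phi> y u u'\<bar> \<le> sup2 \<phi>" if "norm u' \<le> 1" for u'
        using Cb3 \<open>norm u \<le> 1\<close> that unfolding sup2_def Cb3_def by (intro cSup_upper) auto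
    qed
  qed
  then show ?thesis by (simp add: mult_ac)
qed

lemma abs_d3_le: "\<bar>d3 \<phi> y v w l\<bar> \<le> sup3 \<phi> * norm v * norm w * norm l"
proof -
  have "\<bar>d3 \<phi> y v w l\<bar> \<le> (sup3 \<phi> * norm w * norm l) * norm v"
  proof (rule abs_le_norm_if_homogeneous[where f = "\<lambda>v. d3 \<phi> y v w l", OF d3_scaleR_1])
    fix u :: 'a assume u: "norm u \<le> 1"
    have "\<bar>d3 \<phi> y u w l\<bar> \<le> (sup3 \<phi> * norm l) * norm w"
    proof (rule abs_le_norm_if_homogeneous[where f = "\<lambda>w. d3 \<phi> y u w l", OF d3_scaleR_2])
      fix u' :: 'a assume u': "norm u' \<le> 1"
      show "\<bar>d3 \<phi> y u u' l\<bar> \<le> sup3 \<phi> * norm l"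
      proof (rule abs_le_norm_if_homogeneous[OF d3_scaleR_3])
        show "\<bar>d3 \<phi> y u u' u''\<bar> \<le> sup3 \<phi>" if "norm u'' \<le> 1" for u''
          using Cb3 u u' that unfolding sup3_def Cb3_def by (intro cSup_upper) auto
      qed
    qed
    then show "\<bar>d3 \<phi> y u w l\<bar> \<le> sup3 \<phi> * norm w * norm l"
      by (simp add: mult_ac)
  qed
  then show ?thesis by (simp add: mult_ac)
qed

lemma sup_nonneg: "0 \<le> sup0 \<phi>" "0 \<le> sup1 \<phi>" "0 \<le> sup2 \<phi>" "0 \<le> sup3 \<phi>"
proof -
  obtain e :: 'a where "norm e = 1"
    using vector_choose_size zero_le_one by blast
  then show "0 \<le> sup0 \<phi>" "0 \<le> sup1 \<phi>" "0 \<le> sup2 \<phi>" "0 \<le> sup3 \<phi>"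
    using abs_le_sup0[of e] abs_d1_le[of e e] abs_d2_le[of e e e] abs_d3_le[of e e e e]
    by (simp_all add: order_trans[OF abs_ge_zero])
qed

lemma abs_diff_le_sup1: "\<bar>\<phi> a - \<phi> b\<bar> \<le> sup1 \<phi> * norm (a - b)"
  by (rule abs_diff_le_of_derivative_bound[where S = UNIV, OF _ has_derivative_d1 abs_d1_le]) auto

lemma abs_d1_diff_le: "\<bar>d1 \<phi> a l - d1 \<phi> b l\<bar> \<le> sup2 \<phi> * norm l * norm (a - b)"
  by (rule abs_diff_le_of_derivative_bound[where S = UNIV, OF _ has_derivative_d2 abs_d2_le]) auto

lemma abs_d2_diff_le: "\<bar>d2 \<phi> a l w - d2 \<phi> b l w\<bar> \<le> sup3 \<phi> * norm l * norm w * norm (a - b)"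
  by (rule abs_diff_le_of_derivative_bound[where S = UNIV, OF _ has_derivative_d3 abs_d3_le]) auto

lemma increment_diff_le:
  assumes "0 < \<delta>" "\<delta> < 1"
  shows "\<bar>(\<phi> (x' + lam) - \<phi> x') - (\<phi> (x + lam) - \<phi> x)\<bar>
    \<le> 4 * sup1 \<phi> powr \<delta> * sup0 \<phi> powr (1 - \<delta>) * dist x' x powr \<delta>"
proof -
  let ?D = "(\<phi> (x' + lam) - \<phi> x') - (\<phi> (x + lam) - \<phi> x)"
  have "\<bar>?D\<bar> \<le> 4 * sup0 \<phi>"
    using abs_le_sup0[of "x' + lam"] abs_le_sup0[of x'] abs_le_sup0[of "x + lam"] abs_le_sup0[of x]
    by linarith
  moreover have "\<bar>?D\<bar> \<le> 4 * (sup1 \<phi> * dist x' x)"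
    using abs_diff_le_sup1[of "x' + lam" "x + lam"] abs_diff_le_sup1[of x' x] sup_nonneg(2)
    by (simp add: dist_norm algebra_simps)
  ultimately have "\<bar>?D\<bar> \<le> 4 * ((sup1 \<phi> * dist x' x) powr \<delta> * sup0 \<phi> powr (1 - \<delta>))"
    using sup_nonneg assms by (intro abs_le_powr_interpolation) auto
  then show ?thesis by (simp add: powr_mult sup_nonneg mult_ac)
qed

lemma increment_diff_le_norm:
  assumes "0 < \<delta>" "\<delta> < 1"
  shows "\<bar>(\<phi> (x' + lam) - \<phi> x') - (\<phi> (x + lam) - \<phi> x)\<bar>
    \<le> 2 * sup2 \<phi> powr \<delta> * sup1 \<phi> powr (1 - \<delta>) * dist x' x powr \<delta> * norm lam"
proof -
  let ?D = "(\<phi> (x' + lam) - \<phi> x') - (\<phi> (x + lam) - \<phi> x)"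
  have "\<bar>?D\<bar> \<le> 2 * (sup1 \<phi> * norm lam)"
    using abs_diff_le_sup1[of "x' + lam" x'] abs_diff_le_sup1[of "x + lam" x] by simp
  then have A: "\<bar>?D\<bar> \<le> (2 * norm lam) * sup1 \<phi>"
    by (simp add: algebra_simps)
  have "\<bar>?D\<bar> \<le> sup2 \<phi> * norm lam * dist x' x"
    using abs_second_difference_le[OF has_derivative_d1 abs_d1_diff_le] by (simp add: dist_norm)
  also have "\<dots> \<le> (2 * norm lam) * (sup2 \<phi> * dist x' x)"
    using sup_nonneg(3) by (simp add: algebra_simps)
  finally have "\<bar>?D\<bar> \<le> (2 * norm lam) * ((sup2 \<phi> * dist x' x) powr \<delta> * sup1 \<phi> powr (1 - \<delta>))"
    using A sup_nonneg assms by (intro abs_le_powr_interpolation) auto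
  then show ?thesis by (simp add: powr_mult sup_nonneg mult_ac)
qed

lemma taylor_remainder_diff_le:
  assumes "0 < \<delta>" "\<delta> < 1"
  shows "\<bar>(\<phi> (x' + lam) - \<phi> x' - d1 \<phi> x' lam) - (\<phi> (x + lam) - \<phi> x - d1 \<phi> x lam)\<bar>
    \<le> 2 * sup3 \<phi> powr \<delta> * sup2 \<phi> powr (1 - \<delta>) * dist x' x powr \<delta> * (norm lam)\<^sup>2"
proof -
  define G where "G = sup3 \<phi> powr \<delta> * sup2 \<phi> powr (1 - \<delta>) * dist x' x powr \<delta>"
  define P where "P \<mu> = (\<phi> (x' + \<mu>) - \<phi> x' - d1 \<phi> x' \<mu>) - (\<phi> (x + \<mu>) - \<phi> x - d1 \<phi> x \<mu>)" for \<mu>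
  define P' where "P' \<mu> = (\<lambda>l. (d1 \<phi> (x' + \<mu>) l - d1 \<phi> x' l) - (d1 \<phi> (x + \<mu>) l - d1 \<phi> x l))" for \<mu>
  have translate: "((\<lambda>\<mu>. \<phi> (y + \<mu>)) has_derivative d1 \<phi> (y + \<mu>)) (at \<mu>)" for y \<mu>
    using has_derivative_translate[OF has_derivative_d1, of y \<mu>] by (simp add: add.commute)
  have linear: "((\<lambda>\<mu>. d1 \<phi> y \<mu>) has_derivative d1 \<phi> y) (at \<mu>)" for y \<mu>
    using has_derivative_bounded_linear[OF has_derivative_d1] by (rule bounded_linear_imp_has_derivative)
  have P': "(P has_derivative P' \<mu>) (at \<mu>)" for \<mu>
  proof -
    have "(P has_derivative (\<lambda>l. (d1 \<phi> (x' + \<mu>) l - 0 - d1 \<phi> x' l) - (d1 \<phi> (x + \<mu>) l - 0 - d1 \<phi> x l)))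
        (at \<mu>)"
      unfolding P_def by (intro has_derivative_diff translate linear has_derivative_const)
    then show ?thesis by (simp add: P'_def)
  qed
  \<comment> \<open>\<open>P\<close> vanishes at \<open>0\<close>, so it is controlled by the mean value theorem in the jump variable;
    its derivative \<open>P'\<close> is an increment of \<open>d1 \<phi>\<close> and is interpolated pointwise.\<close>
  have P'_le: "\<bar>P' \<mu> l\<bar> \<le> 2 * G * norm lam * norm l" if "norm \<mu> \<le> norm lam" for \<mu> l
  proof -
    have "\<bar>P' \<mu> l\<bar> \<le> 2 * (sup2 \<phi> * norm l * norm \<mu>)"
      using abs_d1_diff_le[of "x' + \<mu>" l x'] abs_d1_diff_le[of "x + \<mu>" l x] unfolding P'_def by simp
    then have A: "\<bar>P' \<mu> l\<bar> \<le> (2 * norm \<mu> * norm l) * sup2 \<phi>"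
      by (simp add: algebra_simps)
    have "\<bar>P' \<mu> l\<bar> \<le> sup3 \<phi> * norm l * norm \<mu> * dist x' x"
      using abs_second_difference_le[OF has_derivative_d2 abs_d2_diff_le] unfolding P'_def
      by (simp add: dist_norm)
    also have "\<dots> \<le> (2 * norm \<mu> * norm l) * (sup3 \<phi> * dist x' x)"
      using sup_nonneg(4) by (simp add: algebra_simps)
    finally have "\<bar>P' \<mu> l\<bar> \<le> (2 * norm \<mu> * norm l) * ((sup3 \<phi> * dist x' x) powr \<delta> * sup2 \<phi> powr (1 - \<delta>))"
      using A sup_nonneg assms by (intro abs_le_powr_interpolation) auto
    also have "\<dots> = 2 * G * norm \<mu> * norm l"
      by (simp add: G_def powr_mult sup_nonneg mult_ac)
    also have "\<dots> \<le> 2 * G * norm lam * norm l"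
      unfolding G_def using that by (intro mult_right_mono mult_left_mono) auto
    finally show ?thesis .
  qed
  have "\<bar>P lam - P 0\<bar> \<le> (2 * G * norm lam) * norm (lam - 0)"
    by (rule abs_diff_le_of_derivative_bound[where S = "cball 0 (norm lam)", OF _ P' P'_le]) auto
  moreover have "P 0 = 0"
    using d1_scaleR[of _ 0 0] by (simp add: P_def)
  ultimately show ?thesis
    by (simp add: G_def P_def power2_eq_square mult_ac)
qed

lemma delta_op_diff_le:
  assumes "0 < \<delta>" "\<delta> < 1"
  shows "\<bar>delta_op \<alpha> \<phi> lam x' - delta_op \<alpha> \<phi> lam x\<bar>
    \<le> Calpha \<alpha> \<delta> \<phi> * dist x' x powr \<delta> * jump_weight \<alpha> lam"
proof -
  let ?h = "dist x' x powr \<delta>"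
  have weaken: "\<bar>D\<bar> \<le> Calpha \<alpha> \<delta> \<phi> * ?h * jump_weight \<alpha> lam"
    if "\<bar>D\<bar> \<le> T * ?h * w" "T \<le> Calpha \<alpha> \<delta> \<phi>" "w = jump_weight \<alpha> lam" for D T w
  proof -
    have "0 \<le> w"
      using that(3) by (simp add: jump_weight_def)
    with that(2) have "T * ?h * w \<le> Calpha \<alpha> \<delta> \<phi> * ?h * w"
      by (intro mult_right_mono) auto
    with that(1,3) show ?thesis
      by simp
  qed
  consider (taylor) "\<alpha> = 1" "norm lam \<le> 1" | (increment) "\<alpha> \<noteq> 1" "norm lam \<le> 1" | (large) "1 < norm lam"
    by fastforce
  then show ?thesis
  proof cases
    case taylor
    then have "\<bar>delta_op \<alpha> \<phi> lam x' - delta_op \<alpha> \<phi> lam x\<bar>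
      = \<bar>(\<phi> (x' + lam) - \<phi> x' - d1 \<phi> x' lam) - (\<phi> (x + lam) - \<phi> x - d1 \<phi> x lam)\<bar>"
      by (simp add: delta_op_def)
    also have "\<dots> \<le> Calpha \<alpha> \<delta> \<phi> * ?h * jump_weight \<alpha> lam"
      using taylor by (intro weaken[OF taylor_remainder_diff_le[OF assms]])
        (simp_all add: Calpha_def jump_weight_def power_le_one)
    finally show ?thesis .
  next
    case increment
    then have "\<bar>delta_op \<alpha> \<phi> lam x' - delta_op \<alpha> \<phi> lam x\<bar>
      = \<bar>(\<phi> (x' + lam) - \<phi> x') - (\<phi> (x + lam) - \<phi> x)\<bar>"
      by (simp add: delta_op_def)
    also have "\<dots> \<le> Calpha \<alpha> \<delta> \<phi> * ?h * jump_weight \<alpha> lam"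
      using increment by (intro weaken[OF increment_diff_le_norm[OF assms]])
        (simp_all add: Calpha_def jump_weight_def)
    finally show ?thesis .
  next
    case large
    then have "\<bar>delta_op \<alpha> \<phi> lam x' - delta_op \<alpha> \<phi> lam x\<bar>
      = \<bar>(\<phi> (x' + lam) - \<phi> x') - (\<phi> (x + lam) - \<phi> x)\<bar>"
      by (simp add: delta_op_def)
    also have "\<dots> \<le> Calpha \<alpha> \<delta> \<phi> * ?h * jump_weight \<alpha> lam"
      using large increment_diff_le[OF assms, of x' lam x]
      by (intro weaken[where w = 1]) (auto simp: Calpha_def jump_weight_def abs_square_le_1)
    finally show ?thesis .
  qed
qed

end

theorem lemma4p3:
  fixes \<phi> :: "'a::euclidean_space \<Rightarrow> real"
    and \<alpha> \<delta> \<Lambda>l \<Lambda>u :: real and x x' :: 'a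
  assumes "0 < \<alpha>" "\<alpha> \<le> 1" "0 < \<delta>" "\<delta> < \<alpha>"
    and "0 < \<Lambda>l" "0 < \<Lambda>u"
    and "Cb3 \<phi>"
  shows "(SUP F\<in>(Lset \<alpha> \<Lambda>l \<Lambda>u :: 'a measure set).
            \<integral>\<^sup>+ lam. ennreal \<bar>delta_op \<alpha> \<phi> lam x' - delta_op \<alpha> \<phi> lam x\<bar> \<partial>F)
         \<le> Kconst \<alpha> \<Lambda>l \<Lambda>u TYPE('a) * ennreal (Calpha \<alpha> \<delta> \<phi>) * ennreal (dist x' x powr \<delta>)"
proof -
  let ?C = "Calpha \<alpha> \<delta> \<phi> * dist x' x powr \<delta>"
  have "\<delta> < 1"
    using \<open>\<delta> < \<alpha>\<close> \<open>\<alpha> \<le> 1\<close> by linarith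
  have "0 \<le> Calpha \<alpha> \<delta> \<phi>"
    by (simp add: Calpha_def)
  then have "ennreal \<bar>delta_op \<alpha> \<phi> lam x' - delta_op \<alpha> \<phi> lam x\<bar> \<le> ennreal ?C * ennreal (jump_weight \<alpha> lam)"
    for lam
    using delta_op_diff_le[OF \<open>Cb3 \<phi>\<close> \<open>0 < \<delta>\<close> \<open>\<delta> < 1\<close>, of \<alpha> lam x' x]
    by (simp add: ennreal_mult[symmetric] jump_weight_def ennreal_leI)
  then have "(SUP F\<in>(Lset \<alpha> \<Lambda>l \<Lambda>u :: 'a measure set).
            \<integral>\<^sup>+ lam. ennreal \<bar>delta_op \<alpha> \<phi> lam x' - delta_op \<alpha> \<phi> lam x\<bar> \<partial>F)
         \<le> ennreal ?C * Kconst \<alpha> \<Lambda>l \<Lambda>u TYPE('a)"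
    unfolding Kconst_eq_SUP_jump_weight
    by (intro SUP_nn_integral_le_cmult sets_Lset) (auto simp: jump_weight_def)
  then show ?thesis
    using \<open>0 \<le> Calpha \<alpha> \<delta> \<phi>\<close> by (simp add: ennreal_mult mult_ac)
qed

end
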